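(* Let $A=[a_{ij}]\in\mathcal{M}_3(\mathbb{H})$ be a strictly upper triangular (hence nilpotent) matrix. Then $W(A)$ is a closed disk centered at the origin if and only if $A$ is cycle-free, i.e. if and only if $a_{12}a_{13}a_{23}=0$ (at least one of $a_{12},a_{13},a_{23}$ vanishes).
   Context: $\mathbb{H}$ denotes the real quaternions. The numerical range of $A\in\mathcal{M}_n(\mathbb{H})$ is $W(A)=\{\mathbf{x}^*A\mathbf{x}:\mathbf{x}\in\mathbb{H}^n,\ \mathbf{x}^*\mathbf{x}=1\}$; a closed disk centered at the origin is $\{q\in\mathbb{H}:|q|\le r\}$ for some $r\ge0$. The graph $\mathcal{G}_A$ of $A=[a_{ij}]$ is the undirected graph on $\{1,\dots,n\}$ with an edge between $i$ and $j$ (a loop if $i=j$) whenever $a_{ij}\ne0$ or $a_{ji}\ne0$; $A$ is cycle-free if $\mathcal{G}_A$ contains no cycle. *)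

theory Defs
  imports Complex_Main
begin

datatype quat = Quat (qRe: real) (qI: real) (qJ: real) (qK: real)

instantiation quat :: "{zero, plus, times}"
begin
definition zero_quat_def: "0 = Quat 0 0 0 0"
definition plus_quat_def:
  "p + q = Quat (qRe p + qRe q) (qI p + qI q) (qJ p + qJ q) (qK p + qK q)"
text \<open>Hamilton product, with i^2 = j^2 = k^2 = ijk = -1.\<close>
definition times_quat_def:
  "p * q = Quat
     (qRe p * qRe q - qI p * qI q - qJ p * qJ q - qK p * qK q)
     (qRe p * qI q + qI p * qRe q + qJ p * qK q - qK p * qJ q)
     (qRe p * qJ q - qI p * qK q + qJ p * qRe q + qK p * qI q)
     (qRe p * qK q + qI p * qJ q - qJ p * qI q + qK p * qRe q)"
instance ..
end

instance quat :: comm_monoid_add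
  by standard (simp_all add: plus_quat_def zero_quat_def algebra_simps)


definition qcnj :: "quat \<Rightarrow> quat" where
  "qcnj q = Quat (qRe q) (- qI q) (- qJ q) (- qK q)"

definition qabs :: "quat \<Rightarrow> real" where
  "qabs q = sqrt ((qRe q)\<^sup>2 + (qI q)\<^sup>2 + (qJ q)\<^sup>2 + (qK q)\<^sup>2)"

text \<open>A matrix A in M_n(H) is a function nat => nat => quat, only entries
  with indices in {1..n} are relevant; a vector x in H^n is nat => quat,
  only components with indices in {1..n} are relevant.\<close>

definition numerical_range :: "nat \<Rightarrow> (nat \<Rightarrow> nat \<Rightarrow> quat) \<Rightarrow> quat set" where
  "numerical_range n A =
     {(\<Sum>i\<in>{1..n}. \<Sum>j\<in>{1..n}. qcnj (x i) * A i j * x j) | x.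
        (\<Sum>i\<in>{1..n}. qcnj (x i) * x i) = (Quat 1 0 0 0)}"

definition closed_disk_origin :: "quat set \<Rightarrow> bool" where
  "closed_disk_origin S \<longleftrightarrow> (\<exists>r::real. r \<ge> 0 \<and> S = {q. qabs q \<le> r})"

definition strictly_upper_triangular :: "nat \<Rightarrow> (nat \<Rightarrow> nat \<Rightarrow> quat) \<Rightarrow> bool" where
  "strictly_upper_triangular n A \<longleftrightarrow>
     (\<forall>i\<in>{1..n}. \<forall>j\<in>{1..n}. j \<le> i \<longrightarrow> A i j = 0)"

definition graph_adj :: "(nat \<Rightarrow> nat \<Rightarrow> quat) \<Rightarrow> nat \<Rightarrow> nat \<Rightarrow> bool" where
  "graph_adj A i j \<longleftrightarrow> A i j \<noteq> 0 \<or> A j i \<noteq> 0"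

text \<open>A cycle in G_A: either a loop at a vertex, or a closed walk
  v_1, ..., v_k, v_1 through k \<ge> 3 distinct vertices of {1..n}
  (a simple graph has no 2-cycles).\<close>
definition has_cycle :: "nat \<Rightarrow> (nat \<Rightarrow> nat \<Rightarrow> quat) \<Rightarrow> bool" where
  "has_cycle n A \<longleftrightarrow>
     (\<exists>i\<in>{1..n}. graph_adj A i i) \<or>
     (\<exists>vs. length vs \<ge> 3 \<and> distinct vs \<and> set vs \<subseteq> {1..n} \<and>
        (\<forall>k < length vs - 1. graph_adj A (vs ! k) (vs ! Suc k)) \<and>
        graph_adj A (last vs) (hd vs))"

definition cycle_free :: "nat \<Rightarrow> (nat \<Rightarrow> nat \<Rightarrow> quat) \<Rightarrow> bool" where
  "cycle_free n A \<longleftrightarrow> \<not> has_cycle n A"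

end

theory Submission
  imports Defs
begin

text \<open>Write \<open>a, b, c\<close> for the entries \<open>a\<^sub>1\<^sub>2, a\<^sub>2\<^sub>3, a\<^sub>1\<^sub>3\<close>, so that
  \<open>x\<^sup>*Ax = x\<^sub>1\<^sup>* a x\<^sub>2 + x\<^sub>2\<^sup>* b x\<^sub>3 + x\<^sub>1\<^sup>* c x\<^sub>3\<close>.

  If \<open>c = 0\<close> or \<open>a = 0\<close>, the two remaining terms share a coordinate, and Cauchy-Schwarz
  together with AM-GM bounds \<open>|x\<^sup>*Ax|\<close> on the unit sphere by half the Euclidean norm of the two
  remaining entries; aligning the polar parts of the entries with a target quaternion shows that
  every value of at most that modulus is attained. The case \<open>b = 0\<close> follows from \<open>a = 0\<close> because
  conjugation maps the range for \<open>(a, b, c)\<close> to the range for \<open>(b\<^sup>*, a\<^sup>*, c\<^sup>*)\<close>.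

  If all three entries are nonzero and \<open>W(A)\<close> were the disk of radius \<open>r\<close>, then for every
  unit \<open>u\<close> the point \<open>r u\<close> is attained at a unit vector maximising \<open>Re (u\<^sup>* x\<^sup>*Ax)\<close> on the
  sphere, which therefore satisfies the Lagrange conditions. For \<open>u = \<plusminus>1\<close> these make \<open>\<plusminus>2r\<close>
  eigenvalues of \<open>A + A\<^sup>*\<close>; the two characteristic equations give \<open>Re (a b c\<^sup>*) = 0\<close> and
  \<open>4r\<^sup>2 = |a|\<^sup>2 + |b|\<^sup>2 + |c|\<^sup>2\<close>, and then for \<open>u = i\<close> the conditions force
  \<open>a b c\<^sup>* = 0\<close>.\<close>

section \<open>Quaternion arithmetic\<close>

lemma quat_eqI:
  "qRe p = qRe q \<Longrightarrow> qI p = qI q \<Longrightarrow> qJ p = qJ q \<Longrightarrow> qK p = qK q \<Longrightarrow> p = q"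
  by (cases p; cases q) simp

instantiation quat :: "{uminus, minus, one, scaleR}"
begin
definition uminus_quat_def: "- p = Quat (- qRe p) (- qI p) (- qJ p) (- qK p)"
definition minus_quat_def: "p - q = Quat (qRe p - qRe q) (qI p - qI q) (qJ p - qJ q) (qK p - qK q)"
definition one_quat_def: "1 = Quat 1 0 0 0"
definition scaleR_quat_def: "r *\<^sub>R p = Quat (r * qRe p) (r * qI p) (r * qJ p) (r * qK p)"
instance ..
end

lemma quat_components_zero [simp]: "qRe 0 = 0" "qI 0 = 0" "qJ 0 = 0" "qK 0 = 0"
  by (simp_all add: zero_quat_def)

lemma quat_components_one [simp]: "qRe 1 = 1" "qI 1 = 0" "qJ 1 = 0" "qK 1 = 0"
  by (simp_all add: one_quat_def)

lemma quat_components_plus [simp]: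
  "qRe (p + q) = qRe p + qRe q" "qI (p + q) = qI p + qI q"
  "qJ (p + q) = qJ p + qJ q" "qK (p + q) = qK p + qK q"
  by (simp_all add: plus_quat_def)

lemma quat_components_minus [simp]:
  "qRe (p - q) = qRe p - qRe q" "qI (p - q) = qI p - qI q"
  "qJ (p - q) = qJ p - qJ q" "qK (p - q) = qK p - qK q"
  by (simp_all add: minus_quat_def)

lemma quat_components_uminus [simp]:
  "qRe (- p) = - qRe p" "qI (- p) = - qI p" "qJ (- p) = - qJ p" "qK (- p) = - qK p"
  by (simp_all add: uminus_quat_def)

lemma quat_components_scaleR [simp]:
  "qRe (r *\<^sub>R p) = r * qRe p" "qI (r *\<^sub>R p) = r * qI p"
  "qJ (r *\<^sub>R p) = r * qJ p" "qK (r *\<^sub>R p) = r * qK p"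
  by (simp_all add: scaleR_quat_def)

text \<open>Not a simp rule: expanding real parts of products would defeat the ring-level
  reasoning below.\<close>

lemma quat_components_times:
  "qRe (p * q) = qRe p * qRe q - qI p * qI q - qJ p * qJ q - qK p * qK q"
  "qI (p * q) = qRe p * qI q + qI p * qRe q + qJ p * qK q - qK p * qJ q"
  "qJ (p * q) = qRe p * qJ q - qI p * qK q + qJ p * qRe q + qK p * qI q"
  "qK (p * q) = qRe p * qK q + qI p * qJ q - qJ p * qI q + qK p * qRe q"
  by (simp_all add: times_quat_def)

lemma quat_components_qcnj [simp]:
  "qRe (qcnj p) = qRe p" "qI (qcnj p) = - qI p" "qJ (qcnj p) = - qJ p" "qK (qcnj p) = - qK p"
  by (simp_all add: qcnj_def)

instance quat :: ring_1
proof
  show "(0::quat) \<noteq> 1"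
    by (simp add: zero_quat_def one_quat_def)
qed (rule quat_eqI; simp add: quat_components_times; algebra)+

instance quat :: real_algebra_1
  by standard (rule quat_eqI; simp add: quat_components_times; algebra)+

lemma quat_components_of_real [simp]:
  "qRe (of_real r) = r" "qI (of_real r) = 0" "qJ (of_real r) = 0" "qK (of_real r) = 0"
  by (simp_all add: of_real_def)

lemma quat_mult_of_real [simp]: "p * of_real r = r *\<^sub>R p" "of_real r * p = r *\<^sub>R p"
  for p :: quat
  by (rule quat_eqI; simp add: quat_components_times algebra_simps)+

definition qsqnorm :: "quat \<Rightarrow> real" where
  "qsqnorm q = (qRe q)\<^sup>2 + (qI q)\<^sup>2 + (qJ q)\<^sup>2 + (qK q)\<^sup>2"

lemma qsqnorm_mult: "qsqnorm (p * q) = qsqnorm p * qsqnorm q"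
  unfolding qsqnorm_def by (simp add: quat_components_times power2_eq_square algebra_simps)

lemma qsqnorm_nonneg [simp]: "0 \<le> qsqnorm q"
  unfolding qsqnorm_def by (intro add_nonneg_nonneg) simp_all

lemma qsqnorm_eq_0_iff [simp]: "qsqnorm q = 0 \<longleftrightarrow> q = 0"
  unfolding qsqnorm_def by (auto intro!: quat_eqI simp: add_nonneg_eq_0_iff)

instance quat :: ring_1_no_zero_divisors
  by standard (metis qsqnorm_eq_0_iff qsqnorm_mult mult_eq_0_iff)

lemma qsqnorm_simps [simp]:
  "qsqnorm 0 = 0" "qsqnorm 1 = 1" "qsqnorm (qcnj p) = qsqnorm p" "qsqnorm (- p) = qsqnorm p"
  "qsqnorm (r *\<^sub>R p) = r\<^sup>2 * qsqnorm p"
  by (simp_all add: qsqnorm_def power2_eq_square algebra_simps)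

lemma qsqnorm_add: "qsqnorm (p + q) = qsqnorm p + qsqnorm q + 2 * qRe (p * qcnj q)"
  by (simp add: quat_components_times qsqnorm_def power2_eq_square algebra_simps)

lemma qcnj_simps [simp]:
  "qcnj (qcnj p) = p" "qcnj (p + q) = qcnj p + qcnj q" "qcnj (p - q) = qcnj p - qcnj q"
  "qcnj (- p) = - qcnj p" "qcnj (r *\<^sub>R p) = r *\<^sub>R qcnj p"
  "qcnj 0 = 0" "qcnj 1 = 1"
  by (rule quat_eqI; simp)+

lemma qcnj_eq_0_iff [simp]: "qcnj p = 0 \<longleftrightarrow> p = 0"
  by (metis qcnj_simps(1,6))

lemma qcnj_of_real [simp]: "qcnj (of_real r) = of_real r"
  by (rule quat_eqI) simp_all

lemma qcnj_mult: "qcnj (p * q) = qcnj q * qcnj p"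
  by (rule quat_eqI) (simp_all add: quat_components_times algebra_simps)

lemma qcnj_mult_self: "qcnj p * p = of_real (qsqnorm p)"
  and mult_qcnj_self: "p * qcnj p = of_real (qsqnorm p)"
  by (rule quat_eqI; simp add: quat_components_times qsqnorm_def power2_eq_square algebra_simps)+

lemma qcnj_mult_self_left [simp]:
  "p * (qcnj p * q) = qsqnorm p *\<^sub>R q" "qcnj p * (p * q) = qsqnorm p *\<^sub>R q"
  by (simp_all add: mult.assoc[symmetric] mult_qcnj_self qcnj_mult_self)

lemma qabs_eq_sqrt_qsqnorm: "qabs q = sqrt (qsqnorm q)"
  by (simp add: qabs_def qsqnorm_def)

lemma qabs_nonneg: "0 \<le> qabs q"
  by (simp add: qabs_eq_sqrt_qsqnorm)

lemma qabs_power2: "(qabs q)\<^sup>2 = qsqnorm q"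
  by (simp add: qabs_eq_sqrt_qsqnorm qsqnorm_nonneg)

lemma qabs_mult: "qabs (p * q) = qabs p * qabs q"
  by (simp add: qabs_eq_sqrt_qsqnorm qsqnorm_mult real_sqrt_mult)

lemma qabs_simps [simp]: "qabs (qcnj q) = qabs q" "qabs q = 0 \<longleftrightarrow> q = 0" "qabs 0 = 0"
  by (simp_all add: qabs_eq_sqrt_qsqnorm)

lemma qabs_scaleR: "qabs (r *\<^sub>R q) = \<bar>r\<bar> * qabs q"
  by (simp add: qabs_eq_sqrt_qsqnorm real_sqrt_mult)

lemma qRe_le_qabs: "qRe q \<le> qabs q"
  unfolding qabs_def by (rule real_le_rsqrt) simp

lemma qabs_triangle: "qabs (p + q) \<le> qabs p + qabs q"
proof -
  have "qsqnorm (p + q) \<le> (qabs p + qabs q)\<^sup>2"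
    using qRe_le_qabs[of "p * qcnj q"]
    by (simp add: qsqnorm_add power2_sum qabs_power2 qabs_mult)
  then show ?thesis
    by (metis qabs_eq_sqrt_qsqnorm qabs_nonneg add_nonneg_nonneg real_sqrt_le_iff real_sqrt_abs abs_of_nonneg)
qed

lemma unit_quat_mult_qcnj [simp]:
  assumes "qsqnorm u = 1"
  shows "u * qcnj u = 1" "qcnj u * u = 1" "p * u * qcnj u = p" "p * qcnj u * u = p"
  using assms by (simp_all add: mult_qcnj_self qcnj_mult_self mult.assoc)

lemma add_qcnj: "q + qcnj q = (2 * qRe q) *\<^sub>R 1"
  by (rule quat_eqI) simp_all

lemma qcnj_pure: "qRe q = 0 \<Longrightarrow> qcnj q = - q"
  by (rule quat_eqI) simp_all

lemma qRe_swapped_triple_product: "qRe (qcnj b * qcnj a * c) = qRe (a * b * qcnj c)"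
  by (simp add: quat_components_times algebra_simps)

text \<open>The junk value at \<open>0\<close> keeps \<open>qsgn q\<close> a unit quaternion.\<close>

definition qsgn :: "quat \<Rightarrow> quat" where
  "qsgn q = (if q = 0 then 1 else (1 / qabs q) *\<^sub>R q)"

lemma qsqnorm_qsgn [simp]: "qsqnorm (qsgn q) = 1"
  by (simp add: qsgn_def power_divide qabs_power2)

lemma qabs_scaleR_qsgn [simp]: "qabs q *\<^sub>R qsgn q = q"
  by (simp add: qsgn_def)

lemma mult_qcnj_qsgn [simp]:
  "q * (qcnj (qsgn q) * p) = qabs q *\<^sub>R p" "qcnj (qsgn q) * (q * p) = qabs q *\<^sub>R p"
proof -
  have "q * (qcnj (qsgn q) * p) = qabs q *\<^sub>R (qsgn q * (qcnj (qsgn q) * p))"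
    by (metis qabs_scaleR_qsgn mult_scaleR_left)
  then show "q * (qcnj (qsgn q) * p) = qabs q *\<^sub>R p"
    by simp
  have "qcnj (qsgn q) * (q * p) = qabs q *\<^sub>R (qcnj (qsgn q) * (qsgn q * p))"
    by (metis qabs_scaleR_qsgn mult_scaleR_left mult_scaleR_right)
  then show "qcnj (qsgn q) * (q * p) = qabs q *\<^sub>R p"
    by simp
qed

lemma mult_qcnj_qsgn_self [simp]:
  "q * qcnj (qsgn q) = of_real (qabs q)" "qcnj (qsgn q) * q = of_real (qabs q)"
  using mult_qcnj_qsgn[of q 1] by (simp_all add: of_real_def)

lemma bilinear_le_on_sphere:
  fixes P Q x y z :: real
  assumes "x\<^sup>2 + y\<^sup>2 + z\<^sup>2 = 1"
  shows "y * (P * x + Q * z) \<le> sqrt (P\<^sup>2 + Q\<^sup>2) / 2"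
proof -
  define w where "w = sqrt (x\<^sup>2 + z\<^sup>2)"
  have "(P * x + Q * z)\<^sup>2 \<le> (P\<^sup>2 + Q\<^sup>2) * (x\<^sup>2 + z\<^sup>2)"
    using zero_le_power2[of "P * z - Q * x"] by (simp add: power2_eq_square algebra_simps)
  then have "\<bar>P * x + Q * z\<bar> \<le> sqrt (P\<^sup>2 + Q\<^sup>2) * w"
    unfolding w_def by (metis real_sqrt_abs real_sqrt_le_mono real_sqrt_mult)
  then have "\<bar>y\<bar> * \<bar>P * x + Q * z\<bar> \<le> \<bar>y\<bar> * (sqrt (P\<^sup>2 + Q\<^sup>2) * w)"
    by (rule mult_left_mono) simp
  then have "y * (P * x + Q * z) \<le> sqrt (P\<^sup>2 + Q\<^sup>2) * (\<bar>y\<bar> * w)"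
    by (metis abs_ge_self abs_mult mult.left_commute order_trans)
  also have "\<dots> \<le> sqrt (P\<^sup>2 + Q\<^sup>2) * ((y\<^sup>2 + w\<^sup>2) / 2)"
    using zero_le_power2[of "\<bar>y\<bar> - w"]
    by (intro mult_left_mono) (simp_all add: power2_eq_square algebra_simps)
  also have "y\<^sup>2 + w\<^sup>2 = 1"
    using assms by (simp add: w_def)
  finally show ?thesis
    by simp
qed

lemma bilinear_attains_on_sphere:
  fixes P Q t :: real
  assumes "0 \<le> t" "t \<le> sqrt (P\<^sup>2 + Q\<^sup>2) / 2"
  shows "\<exists>x y z. x\<^sup>2 + y\<^sup>2 + z\<^sup>2 = 1 \<and> y * (P * x + Q * z) = t"
proof (cases "P\<^sup>2 + Q\<^sup>2 = 0")
  case True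
  then show ?thesis
    using assms by (intro exI[of _ 1] exI[of _ 0]) simp
next
  case False
  define K where "K = sqrt (P\<^sup>2 + Q\<^sup>2)"
  have K: "0 < K" "K\<^sup>2 = P\<^sup>2 + Q\<^sup>2"
    using False by (simp_all add: K_def add_nonneg_nonneg order_less_le)
  \<comment> \<open>witness \<open>(x, y, z) = (sin \<theta> P / K, cos \<theta>, sin \<theta> Q / K)\<close>\<close>
  define \<theta> where "\<theta> = arcsin (2 * t / K) / 2"
  have "sin (2 * \<theta>) = 2 * t / K"
    using assms K by (simp add: \<theta>_def K_def[symmetric] sin_arcsin field_simps)
  then have sin_cos: "sin \<theta> * cos \<theta> * K = t"
    using K unfolding sin_double by (simp add: field_simps)
  have "(sin \<theta> * P / K)\<^sup>2 + (sin \<theta> * Q / K)\<^sup>2 = (sin \<theta>)\<^sup>2 * ((P\<^sup>2 + Q\<^sup>2) / K\<^sup>2)"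
    by (simp add: power_divide power_mult_distrib add_divide_distrib algebra_simps)
  also have "\<dots> = (sin \<theta>)\<^sup>2"
    using K by (simp flip: K(2))
  finally have "(sin \<theta> * P / K)\<^sup>2 + (cos \<theta>)\<^sup>2 + (sin \<theta> * Q / K)\<^sup>2 = 1"
    using sin_cos_squared_add[of \<theta>] by linarith
  moreover have "cos \<theta> * (P * (sin \<theta> * P / K) + Q * (sin \<theta> * Q / K)) = sin \<theta> * cos \<theta> * ((P\<^sup>2 + Q\<^sup>2) / K)"
    by (simp add: power2_eq_square add_divide_distrib algebra_simps)
  moreover have "\<dots> = t"
    unfolding K(2)[symmetric] using sin_cos K(1) by (simp add: power2_eq_square)
  ultimately show ?thesis
    by metis
qed

section \<open>Reduction to the three entries above the diagonal\<close>

definition triu3_form :: "quat \<Rightarrow> quat \<Rightarrow> quat \<Rightarrow> quat \<Rightarrow> quat \<Rightarrow> quat \<Rightarrow> quat" where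
  "triu3_form a12 a23 a13 x1 x2 x3 = qcnj x1 * a12 * x2 + qcnj x2 * a23 * x3 + qcnj x1 * a13 * x3"

definition sqnorm3 :: "quat \<Rightarrow> quat \<Rightarrow> quat \<Rightarrow> real" where
  "sqnorm3 x1 x2 x3 = qsqnorm x1 + qsqnorm x2 + qsqnorm x3"

definition triu3_range :: "quat \<Rightarrow> quat \<Rightarrow> quat \<Rightarrow> quat set" where
  "triu3_range a12 a23 a13 = {triu3_form a12 a23 a13 x1 x2 x3 | x1 x2 x3. sqnorm3 x1 x2 x3 = 1}"

lemma strictly_upper_triangular_3_lower:
  assumes "strictly_upper_triangular 3 A"
  shows "A 1 1 = 0" "A 2 1 = 0" "A 2 2 = 0" "A 3 1 = 0" "A 3 2 = 0" "A 3 3 = 0"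
  using assms unfolding strictly_upper_triangular_def by auto

lemma numerical_range_3_eq_triu3_range:
  assumes "strictly_upper_triangular 3 A"
  shows "numerical_range 3 A = triu3_range (A 1 2) (A 2 3) (A 1 3)"
proof -
  note lower = strictly_upper_triangular_3_lower[OF assms]
  have three: "{1..3::nat} = {1, 2, 3}"
    by auto
  have form: "(\<Sum>i\<in>{1..3}. \<Sum>j\<in>{1..3}. qcnj (x i) * A i j * x j)
      = triu3_form (A 1 2) (A 2 3) (A 1 3) (x 1) (x 2) (x 3)" for x
    unfolding three using lower by (simp add: triu3_form_def algebra_simps)
  have unit: "(\<Sum>i\<in>{1..3}. qcnj (x i) * x i) = Quat 1 0 0 0 \<longleftrightarrow> sqnorm3 (x 1) (x 2) (x 3) = 1"
    for x :: "nat \<Rightarrow> quat"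
  proof -
    have "(\<Sum>i\<in>{1..3}. qcnj (x i) * x i) = of_real (sqnorm3 (x 1) (x 2) (x 3))"
      unfolding three by (simp add: qcnj_mult_self sqnorm3_def)
    then show ?thesis
      by (simp add: one_quat_def[symmetric])
  qed
  show ?thesis
  proof (rule set_eqI)
    fix q
    have "q \<in> triu3_range (A 1 2) (A 2 3) (A 1 3)" if "q \<in> numerical_range 3 A"
      using that form unit unfolding numerical_range_def triu3_range_def by blast
    moreover have "q \<in> numerical_range 3 A" if range: "q \<in> triu3_range (A 1 2) (A 2 3) (A 1 3)"
    proof -
      obtain x1 x2 x3 where q: "q = triu3_form (A 1 2) (A 2 3) (A 1 3) x1 x2 x3" "sqnorm3 x1 x2 x3 = 1"
        using range unfolding triu3_range_def by blast
      define x where "x i = (if i = 1 then x1 else if i = 2 then x2 else x3)" for i :: nat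
      have "x 1 = x1" "x 2 = x2" "x 3 = x3"
        by (simp_all add: x_def)
      then have "q = (\<Sum>i\<in>{1..3}. \<Sum>j\<in>{1..3}. qcnj (x i) * A i j * x j)"
        "(\<Sum>i\<in>{1..3}. qcnj (x i) * x i) = Quat 1 0 0 0"
        using q form[of x] unit[of x] by simp_all
      then show ?thesis
        unfolding numerical_range_def by blast
    qed
    ultimately show "q \<in> numerical_range 3 A \<longleftrightarrow> q \<in> triu3_range (A 1 2) (A 2 3) (A 1 3)"
      by blast
  qed
qed

lemma symp_cycle_on_three_vertices:
  fixes vs :: "nat list"
  assumes "symp R" "length vs \<ge> 3" "distinct vs" "set vs \<subseteq> {1..3}"
    and "\<forall>k < length vs - 1. R (vs ! k) (vs ! Suc k)" "R (last vs) (hd vs)"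
  shows "R 1 2 \<and> R 2 3 \<and> R 1 3"
proof -
  have three: "{1..3::nat} = {1, 2, 3}"
    by auto
  have "length vs \<le> card {1, 2, 3 :: nat}"
    using assms(3,4) unfolding three by (metis card_mono distinct_card finite.emptyI finite.insertI)
  then have "length vs = 3"
    using assms(2) by simp
  then obtain u v w where vs: "vs = [u, v, w]"
    by (auto simp: length_Suc_conv numeral_3_eq_3)
  have "R u v" "R v w" "R w u"
    using assms(5)[rule_format, of 0] assms(5)[rule_format, of 1] assms(6) vs by simp_all
  moreover have "u \<in> {1, 2, 3}" "v \<in> {1, 2, 3}" "w \<in> {1, 2, 3}" "u \<noteq> v" "v \<noteq> w" "u \<noteq> w"
    using assms(3,4) vs unfolding three by auto
  ultimately show ?thesis
    using assms(1) unfolding symp_def by (smt (verit) insertE empty_iff)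
qed

lemma cycle_free_3_iff:
  assumes "strictly_upper_triangular 3 A"
  shows "cycle_free 3 A \<longleftrightarrow> A 1 2 = 0 \<or> A 2 3 = 0 \<or> A 1 3 = 0"
proof -
  note lower = strictly_upper_triangular_3_lower[OF assms]
  have "{1..3::nat} = {1, 2, 3}"
    by auto
  then have no_loop: "\<not> (\<exists>i\<in>{1..3}. graph_adj A i i)"
    using lower unfolding graph_adj_def by auto
  have "symp (graph_adj A)"
    unfolding graph_adj_def by (auto intro: sympI)
  then have triangle: "A 1 2 \<noteq> 0 \<and> A 2 3 \<noteq> 0 \<and> A 1 3 \<noteq> 0"
    if "length vs \<ge> 3" "distinct vs" "set vs \<subseteq> {1..3}"
      "\<forall>k < length vs - 1. graph_adj A (vs ! k) (vs ! Suc k)" "graph_adj A (last vs) (hd vs)"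
    for vs
    using symp_cycle_on_three_vertices[OF _ that] lower unfolding graph_adj_def by simp
  have "has_cycle 3 A" if "A 1 2 \<noteq> 0" "A 2 3 \<noteq> 0" "A 1 3 \<noteq> 0"
  proof -
    have "\<forall>k < length [1, 2, 3 :: nat] - 1. graph_adj A ([1, 2, 3] ! k) ([1, 2, 3] ! Suc k)"
      using that by (auto simp: graph_adj_def less_Suc_eq)
    then show ?thesis
      unfolding has_cycle_def using that(3)
      by (intro disjI2 exI[of _ "[1, 2, 3]"]) (simp add: graph_adj_def)
  qed
  then show ?thesis
    unfolding cycle_free_def using no_loop triangle unfolding has_cycle_def by blast
qed

section \<open>Cycle-free matrices: the range is a disk\<close>

lemma closed_disk_originI:
  assumes "0 \<le> r" "\<And>q. q \<in> S \<Longrightarrow> qabs q \<le> r" "\<And>q. qabs q \<le> r \<Longrightarrow> q \<in> S"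
  shows "closed_disk_origin S"
  unfolding closed_disk_origin_def using assms by (intro exI[of _ r]) auto

lemma closed_disk_origin_qcnj_image:
  assumes "closed_disk_origin S"
  shows "closed_disk_origin (qcnj ` S)"
proof -
  obtain r where "0 \<le> r" "S = {q. qabs q \<le> r}"
    using assms unfolding closed_disk_origin_def by blast
  then show ?thesis
    by (intro closed_disk_originI[of r]) (auto intro: image_eqI[of _ qcnj "qcnj q" for q])
qed

lemma qcnj_triu3_form:
  "qcnj (triu3_form a b c x1 x2 x3) = triu3_form (qcnj b) (qcnj a) (qcnj c) x3 x2 x1"
  by (simp add: triu3_form_def qcnj_mult mult.assoc)

lemma qcnj_image_triu3_range:
  "qcnj ` triu3_range a b c = triu3_range (qcnj b) (qcnj a) (qcnj c)"
proof -
  have reverse: "sqnorm3 x3 x2 x1 = sqnorm3 x1 x2 x3" for x1 x2 x3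
    by (simp add: sqnorm3_def)
  show ?thesis
    unfolding triu3_range_def qcnj_triu3_form[symmetric]
  proof (intro equalityI subsetI)
    fix q
    assume "q \<in> qcnj ` {triu3_form a b c x1 x2 x3 | x1 x2 x3. sqnorm3 x1 x2 x3 = 1}"
    then obtain x1 x2 x3 where "q = qcnj (triu3_form a b c x1 x2 x3)" "sqnorm3 x1 x2 x3 = 1"
      by blast
    then show "q \<in> {qcnj (triu3_form a b c x3 x2 x1) | x1 x2 x3. sqnorm3 x1 x2 x3 = 1}"
      by (intro CollectI exI[of _ x3] exI[of _ x2] exI[of _ x1]) (simp add: reverse)
  next
    fix q
    assume "q \<in> {qcnj (triu3_form a b c x3 x2 x1) | x1 x2 x3. sqnorm3 x1 x2 x3 = 1}"
    then obtain x1 x2 x3 where "q = qcnj (triu3_form a b c x3 x2 x1)" "sqnorm3 x1 x2 x3 = 1"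
      by blast
    moreover have "sqnorm3 x3 x2 x1 = 1"
      using reverse \<open>sqnorm3 x1 x2 x3 = 1\<close> by simp
    ultimately show "q \<in> qcnj ` {triu3_form a b c x1 x2 x3 | x1 x2 x3. sqnorm3 x1 x2 x3 = 1}"
      by blast
  qed
qed

lemma closed_disk_origin_triu3_range_c_zero: "closed_disk_origin (triu3_range a b 0)"
proof (rule closed_disk_originI)
  let ?r = "sqrt ((qabs a)\<^sup>2 + (qabs b)\<^sup>2) / 2"
  show "0 \<le> ?r"
    by simp
  fix q
  show "qabs q \<le> ?r" if mem: "q \<in> triu3_range a b 0"
  proof -
    obtain x1 x2 x3 where x: "q = triu3_form a b 0 x1 x2 x3" "sqnorm3 x1 x2 x3 = 1"
      using mem unfolding triu3_range_def by blast
    have "qabs q \<le> qabs (qcnj x1 * a * x2) + qabs (qcnj x2 * b * x3)"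
      unfolding x(1) triu3_form_def by (simp add: qabs_triangle)
    also have "\<dots> = qabs x2 * (qabs a * qabs x1 + qabs b * qabs x3)"
      by (simp add: qabs_mult algebra_simps)
    also have "\<dots> \<le> ?r"
      by (rule bilinear_le_on_sphere) (use x(2) in \<open>simp add: sqnorm3_def qabs_power2\<close>)
    finally show ?thesis .
  qed
  show "q \<in> triu3_range a b 0" if le: "qabs q \<le> ?r"
  proof -
    obtain x y z where sphere: "x\<^sup>2 + y\<^sup>2 + z\<^sup>2 = 1" and attained: "y * (qabs a * x + qabs b * z) = qabs q"
      using bilinear_attains_on_sphere[OF qabs_nonneg le] by blast
    let ?u = "qsgn q"
    have "triu3_form a b 0 (x *\<^sub>R (qsgn a * qcnj ?u)) (of_real y) (z *\<^sub>R (qcnj (qsgn b) * ?u))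
        = (y * (qabs a * x + qabs b * z)) *\<^sub>R ?u"
      by (simp add: triu3_form_def qcnj_mult mult.assoc algebra_simps)
    moreover have "sqnorm3 (x *\<^sub>R (qsgn a * qcnj ?u)) (of_real y) (z *\<^sub>R (qcnj (qsgn b) * ?u)) = 1"
      using sphere by (simp add: sqnorm3_def qsqnorm_mult qsqnorm_def[of "of_real y"] ac_simps)
    ultimately show ?thesis
      unfolding triu3_range_def attained by force
  qed
qed

lemma closed_disk_origin_triu3_range_a_zero: "closed_disk_origin (triu3_range 0 b c)"
proof (rule closed_disk_originI)
  let ?r = "sqrt ((qabs b)\<^sup>2 + (qabs c)\<^sup>2) / 2"
  show "0 \<le> ?r"
    by simp
  fix q
  show "qabs q \<le> ?r" if mem: "q \<in> triu3_range 0 b c"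
  proof -
    obtain x1 x2 x3 where x: "q = triu3_form 0 b c x1 x2 x3" "sqnorm3 x1 x2 x3 = 1"
      using mem unfolding triu3_range_def by blast
    have "qabs q \<le> qabs (qcnj x2 * b * x3) + qabs (qcnj x1 * c * x3)"
      unfolding x(1) triu3_form_def by (simp add: qabs_triangle)
    also have "\<dots> = qabs x3 * (qabs b * qabs x2 + qabs c * qabs x1)"
      by (simp add: qabs_mult algebra_simps)
    also have "\<dots> \<le> ?r"
      by (rule bilinear_le_on_sphere) (use x(2) in \<open>simp add: sqnorm3_def qabs_power2 ac_simps\<close>)
    finally show ?thesis .
  qed
  show "q \<in> triu3_range 0 b c" if le: "qabs q \<le> ?r"
  proof -
    obtain x y z where sphere: "x\<^sup>2 + y\<^sup>2 + z\<^sup>2 = 1" and attained: "y * (qabs b * x + qabs c * z) = qabs q"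
      using bilinear_attains_on_sphere[OF qabs_nonneg le] by blast
    let ?u = "qsgn q"
    have "triu3_form 0 b c (z *\<^sub>R qsgn c) (x *\<^sub>R qsgn b) (y *\<^sub>R ?u) = (y * (qabs b * x + qabs c * z)) *\<^sub>R ?u"
      by (simp add: triu3_form_def mult.assoc algebra_simps)
    moreover have "sqnorm3 (z *\<^sub>R qsgn c) (x *\<^sub>R qsgn b) (y *\<^sub>R ?u) = 1"
      using sphere by (simp add: sqnorm3_def ac_simps)
    ultimately show ?thesis
      unfolding triu3_range_def attained by force
  qed
qed

section \<open>Matrices with a triangle: the range is not a disk\<close>

text \<open>The first-order conditions, with Lagrange multiplier \<open>R / 2\<close>, for the unit vector \<open>y\<close>
  to maximise \<open>Re (u\<^sup>* x\<^sup>*Ax)\<close> over unit vectors \<open>x\<close>.\<close>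

definition stationary :: "quat \<Rightarrow> quat \<Rightarrow> quat \<Rightarrow> quat \<Rightarrow> real \<Rightarrow> quat \<Rightarrow> quat \<Rightarrow> quat \<Rightarrow> bool" where
  "stationary a b c u R y1 y2 y3 \<longleftrightarrow>
     a * y2 * qcnj u + c * y3 * qcnj u = R *\<^sub>R y1 \<and>
     qcnj a * y1 * u + b * y3 * qcnj u = R *\<^sub>R y2 \<and>
     qcnj b * y2 * u + qcnj c * y1 * u = R *\<^sub>R y3"

lemma triu3_form_scaleR:
  "triu3_form a b c (t *\<^sub>R x1) (t *\<^sub>R x2) (t *\<^sub>R x3) = t\<^sup>2 *\<^sub>R triu3_form a b c x1 x2 x3"
  by (simp add: triu3_form_def power2_eq_square algebra_simps)

lemma sqnorm3_scaleR: "sqnorm3 (t *\<^sub>R x1) (t *\<^sub>R x2) (t *\<^sub>R x3) = t\<^sup>2 * sqnorm3 x1 x2 x3"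
  by (simp add: sqnorm3_def algebra_simps)

lemma qabs_triu3_form_le:
  assumes "\<And>x1 x2 x3. sqnorm3 x1 x2 x3 = 1 \<Longrightarrow> qabs (triu3_form a b c x1 x2 x3) \<le> r"
  shows "qabs (triu3_form a b c z1 z2 z3) \<le> r * sqnorm3 z1 z2 z3"
proof (cases "sqnorm3 z1 z2 z3 = 0")
  case True
  then have "z1 = 0" "z2 = 0" "z3 = 0"
    unfolding sqnorm3_def using qsqnorm_nonneg qsqnorm_eq_0_iff by (smt (verit))+
  then show ?thesis
    by (simp add: triu3_form_def sqnorm3_def)
next
  case False
  then have pos: "0 < sqnorm3 z1 z2 z3"
    unfolding sqnorm3_def using qsqnorm_nonneg by (smt (verit))
  define t where "t = 1 / sqrt (sqnorm3 z1 z2 z3)"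
  have t2: "t\<^sup>2 = 1 / sqnorm3 z1 z2 z3"
    unfolding t_def using pos by (simp add: power_divide)
  have "sqnorm3 (t *\<^sub>R z1) (t *\<^sub>R z2) (t *\<^sub>R z3) = 1"
    using pos by (simp add: sqnorm3_scaleR t2)
  from assms[OF this] have "qabs (triu3_form a b c z1 z2 z3) / sqnorm3 z1 z2 z3 \<le> r"
    unfolding triu3_form_scaleR qabs_scaleR t2 using pos by simp
  then show ?thesis
    using pos by (simp add: pos_divide_le_eq)
qed

lemma quadratic_nonpos_imp_linear_coeff_eq_0:
  fixes L M :: real
  assumes "\<And>t. t * L + t\<^sup>2 * M \<le> 0" "0 \<le> L"
  shows "L = 0"
proof (rule ccontr)
  assume "L \<noteq> 0"
  then have "0 < L"
    using assms(2) by simp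
  define t where "t = L / (\<bar>M\<bar> + 1)"
  have "0 < t" "t * \<bar>M\<bar> < L"
    using \<open>0 < L\<close> by (simp_all add: t_def field_simps)
  then have "t\<^sup>2 * \<bar>M\<bar> < t * L"
    by (simp add: power2_eq_square)
  moreover have "t\<^sup>2 * - \<bar>M\<bar> \<le> t\<^sup>2 * M"
    by (rule mult_left_mono) simp_all
  ultimately show False
    using assms(1)[of t] by linarith
qed

text \<open>The coefficient of \<open>t\<close> pairs \<open>x\<close> with the gradient at \<open>y\<close> of
  \<open>Re (u\<^sup>* x\<^sup>*Ax) - r |x|\<^sup>2\<close>; its components are the defects of the equations of
  \<open>stationary a b c u (2 * r)\<close>.\<close>

lemma triu3_form_expansion:
  "qRe (qcnj u * triu3_form a b c (y1 + t *\<^sub>R x1) (y2 + t *\<^sub>R x2) (y3 + t *\<^sub>R x3))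
     - r * sqnorm3 (y1 + t *\<^sub>R x1) (y2 + t *\<^sub>R x2) (y3 + t *\<^sub>R x3)
   = (qRe (qcnj u * triu3_form a b c y1 y2 y3) - r * sqnorm3 y1 y2 y3)
     + t * qRe (qcnj x1 * (a * y2 * qcnj u + c * y3 * qcnj u - (2 * r) *\<^sub>R y1)
              + qcnj x2 * (qcnj a * y1 * u + b * y3 * qcnj u - (2 * r) *\<^sub>R y2)
              + qcnj x3 * (qcnj b * y2 * u + qcnj c * y1 * u - (2 * r) *\<^sub>R y3))
     + t\<^sup>2 * (qRe (qcnj u * triu3_form a b c x1 x2 x3) - r * sqnorm3 x1 x2 x3)"
  unfolding triu3_form_def sqnorm3_def qsqnorm_def by (simp add: quat_components_times) algebra

lemma stationary_if_maximizer:
  assumes le: "\<And>x1 x2 x3. qRe (qcnj u * triu3_form a b c x1 x2 x3) \<le> r * sqnorm3 x1 x2 x3"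
    and eq: "qRe (qcnj u * triu3_form a b c y1 y2 y3) = r * sqnorm3 y1 y2 y3"
  shows "stationary a b c u (2 * r) y1 y2 y3"
proof -
  define g1 where "g1 = a * y2 * qcnj u + c * y3 * qcnj u - (2 * r) *\<^sub>R y1"
  define g2 where "g2 = qcnj a * y1 * u + b * y3 * qcnj u - (2 * r) *\<^sub>R y2"
  define g3 where "g3 = qcnj b * y2 * u + qcnj c * y1 * u - (2 * r) *\<^sub>R y3"
  define M where "M = qRe (qcnj u * triu3_form a b c g1 g2 g3) - r * sqnorm3 g1 g2 g3"
  have gradient: "qRe (qcnj g1 * g1 + qcnj g2 * g2 + qcnj g3 * g3) = qsqnorm g1 + qsqnorm g2 + qsqnorm g3"
    by (simp add: qcnj_mult_self)
  \<comment> \<open>perturb \<open>y\<close> along the gradient itself\<close>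
  have "t * (qsqnorm g1 + qsqnorm g2 + qsqnorm g3) + t\<^sup>2 * M \<le> 0" for t
    using triu3_form_expansion[of u a b c y1 t g1 y2 g2 y3 g3 r] le[of "y1 + t *\<^sub>R g1" "y2 + t *\<^sub>R g2" "y3 + t *\<^sub>R g3"]
    unfolding eq g1_def[symmetric] g2_def[symmetric] g3_def[symmetric] M_def[symmetric] gradient
    by simp
  then have "qsqnorm g1 + qsqnorm g2 + qsqnorm g3 = 0"
    by (rule quadratic_nonpos_imp_linear_coeff_eq_0) (simp add: add_nonneg_nonneg)
  then have "g1 = 0" "g2 = 0" "g3 = 0"
    using qsqnorm_nonneg qsqnorm_eq_0_iff by (smt (verit))+
  then show ?thesis
    unfolding stationary_def g1_def g2_def g3_def by simp
qed

lemma stationary_swap: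
  "stationary a b c u R y1 y2 y3 \<Longrightarrow> stationary (qcnj b) (qcnj a) (qcnj c) (qcnj u) R y3 y2 y1"
  unfolding stationary_def by (simp add: add.commute)

lemma stationary_eliminate_middle:
  assumes "stationary a b c u R y1 y2 y3" "qsqnorm u = 1"
  shows "(R\<^sup>2 - qsqnorm a) *\<^sub>R y1 = a * b * y3 * qcnj u * qcnj u + R *\<^sub>R (c * y3 * qcnj u)"
proof -
  have first: "a * y2 * qcnj u + c * y3 * qcnj u = R *\<^sub>R y1"
    and middle: "qcnj a * y1 * u + b * y3 * qcnj u = R *\<^sub>R y2"
    using assms(1) unfolding stationary_def by simp_all
  have "R\<^sup>2 *\<^sub>R y1 = R *\<^sub>R (a * y2 * qcnj u + c * y3 * qcnj u)"
    by (simp add: first power2_eq_square)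
  also have "\<dots> = a * (R *\<^sub>R y2) * qcnj u + R *\<^sub>R (c * y3 * qcnj u)"
    by (simp add: algebra_simps)
  also have "\<dots> = qsqnorm a *\<^sub>R y1 + a * b * y3 * qcnj u * qcnj u + R *\<^sub>R (c * y3 * qcnj u)"
    using assms(2) by (simp add: middle[symmetric] algebra_simps mult.assoc)
  finally show ?thesis
    by (simp add: algebra_simps)
qed

lemma stationary_triple_product:
  assumes "stationary a b c u R y1 y2 y3" "qsqnorm u = 1" "R \<noteq> 0"
  defines "g \<equiv> a * b * qcnj c"
  shows "(R * (R\<^sup>2 - qsqnorm a - qsqnorm b - qsqnorm c)) *\<^sub>R y1
    = g * y1 * qcnj u + qcnj g * y1 * u"
proof -
  have y1: "(R\<^sup>2 - qsqnorm a) *\<^sub>R y1 = a * b * y3 * qcnj u * qcnj u + R *\<^sub>R (c * y3 * qcnj u)"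
    using assms(1,2) by (rule stationary_eliminate_middle)
  have y3: "(R\<^sup>2 - qsqnorm b) *\<^sub>R y3 = qcnj b * qcnj a * y1 * u * u + R *\<^sub>R (qcnj c * y1 * u)"
    using stationary_eliminate_middle[OF stationary_swap[OF assms(1)]] assms(2) by simp
  have "((R\<^sup>2 - qsqnorm a) * (R\<^sup>2 - qsqnorm b)) *\<^sub>R y1 = (R\<^sup>2 - qsqnorm b) *\<^sub>R ((R\<^sup>2 - qsqnorm a) *\<^sub>R y1)"
    by (simp add: mult.commute)
  also have "\<dots> = a * b * ((R\<^sup>2 - qsqnorm b) *\<^sub>R y3) * qcnj u * qcnj u + R *\<^sub>R (c * ((R\<^sup>2 - qsqnorm b) *\<^sub>R y3) * qcnj u)"
    unfolding y1 by (simp add: algebra_simps)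
  also have "\<dots> = (qsqnorm a * qsqnorm b + R\<^sup>2 * qsqnorm c) *\<^sub>R y1 + R *\<^sub>R (g * y1 * qcnj u + qcnj g * y1 * u)"
    unfolding y3 using assms(2) by (simp add: g_def qcnj_mult algebra_simps mult.assoc power2_eq_square)
  finally have "R *\<^sub>R ((R * (R\<^sup>2 - qsqnorm a - qsqnorm b - qsqnorm c)) *\<^sub>R y1)
      = R *\<^sub>R (g * y1 * qcnj u + qcnj g * y1 * u)"
    by (simp add: power2_eq_square algebra_simps)
  then show ?thesis
    using assms(3) by (metis scaleR_cancel_left)
qed

lemma stationary_triple_product_swapped:
  assumes "stationary a b c u R y1 y2 y3" "qsqnorm u = 1" "R \<noteq> 0"
  defines "h \<equiv> qcnj b * qcnj a * c"
  shows "(R * (R\<^sup>2 - qsqnorm a - qsqnorm b - qsqnorm c)) *\<^sub>R y3 = h * y3 * u + qcnj h * y3 * qcnj u"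
proof -
  have "(R * (R\<^sup>2 - qsqnorm (qcnj b) - qsqnorm (qcnj a) - qsqnorm (qcnj c))) *\<^sub>R y3
      = qcnj b * qcnj a * qcnj (qcnj c) * y3 * qcnj (qcnj u)
        + qcnj (qcnj b * qcnj a * qcnj (qcnj c)) * y3 * qcnj u"
    by (rule stationary_triple_product[OF stationary_swap[OF assms(1)]]) (simp_all add: assms(2,3))
  then show ?thesis
    by (simp only: h_def qcnj_simps(1) qsqnorm_simps diff_right_commute[of "R\<^sup>2" "qsqnorm b"])
qed

lemma stationary_outer_nonzero:
  assumes "stationary a b c u R y1 y2 y3" "R \<noteq> 0" "sqnorm3 y1 y2 y3 = 1"
  shows "y1 \<noteq> 0 \<or> y3 \<noteq> 0"
proof (rule ccontr)
  assume "\<not> (y1 \<noteq> 0 \<or> y3 \<noteq> 0)"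
  then have "R *\<^sub>R y2 = 0" "y1 = 0" "y3 = 0"
    using assms(1) unfolding stationary_def by simp_all
  then show False
    using assms(2,3) by (simp add: sqnorm3_def)
qed

text \<open>For \<open>u = \<plusminus>1\<close> the conditions say that \<open>y\<close> is an eigenvector of \<open>A + A\<^sup>*\<close> with
  eigenvalue \<open>\<plusminus>R\<close>, and the conclusion is the characteristic equation of \<open>A + A\<^sup>*\<close>.\<close>

lemma stationary_real_unit:
  assumes "stationary a b c (of_real \<sigma>) R y1 y2 y3" "\<sigma>\<^sup>2 = 1" "R \<noteq> 0" "sqnorm3 y1 y2 y3 = 1"
  shows "R * (R\<^sup>2 - qsqnorm a - qsqnorm b - qsqnorm c) = 2 * \<sigma> * qRe (a * b * qcnj c)"
proof -
  have unit: "qsqnorm (of_real \<sigma>) = 1"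
    using assms(2) by (simp add: qsqnorm_def)
  have real_unit: "g * y * of_real \<sigma> + qcnj g * y * of_real \<sigma> = (2 * \<sigma> * qRe g) *\<^sub>R y" for g y
  proof -
    have "g * y * of_real \<sigma> + qcnj g * y * of_real \<sigma> = \<sigma> *\<^sub>R ((g + qcnj g) * y)"
      by (simp add: algebra_simps)
    then show ?thesis
      by (simp add: add_qcnj)
  qed
  have "(R * (R\<^sup>2 - qsqnorm a - qsqnorm b - qsqnorm c)) *\<^sub>R y1 = (2 * \<sigma> * qRe (a * b * qcnj c)) *\<^sub>R y1"
    using stationary_triple_product[OF assms(1) unit assms(3)] real_unit by simp
  moreover have "(R * (R\<^sup>2 - qsqnorm a - qsqnorm b - qsqnorm c)) *\<^sub>R y3 = (2 * \<sigma> * qRe (a * b * qcnj c)) *\<^sub>R y3"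
    using stationary_triple_product_swapped[OF assms(1) unit assms(3)] real_unit
    by (simp only: qcnj_of_real qRe_swapped_triple_product)
  ultimately show ?thesis
    using stationary_outer_nonzero[OF assms(1,3,4)] by (metis scaleR_cancel_right)
qed

lemma stationary_pure_unit:
  assumes "stationary a b c u R y1 y2 y3" "qsqnorm u = 1" "qRe u = 0" "R \<noteq> 0" "sqnorm3 y1 y2 y3 = 1"
    and "R\<^sup>2 = qsqnorm a + qsqnorm b + qsqnorm c" "qRe (a * b * qcnj c) = 0"
  shows "a * b * qcnj c = 0"
proof -
  have u: "u \<noteq> 0" "qcnj u = - u"
    using assms(2,3) by (auto simp: qcnj_pure)
  have "qRe (qcnj b * qcnj a * c) = 0"
    using assms(7) by (simp only: qRe_swapped_triple_product)
  then have "0 = qcnj b * qcnj a * c * y3 * u + qcnj b * qcnj a * c * y3 * u"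
    using stationary_triple_product_swapped[OF assms(1,2,4)] assms(6) u by (simp add: qcnj_pure)
  then have "qcnj b * qcnj a * c = 0 \<or> y3 = 0"
    using u by (simp flip: scaleR_2)
  moreover have "a * b * qcnj c * y1 * u + a * b * qcnj c * y1 * u = 0"
    using stationary_triple_product[OF assms(1,2,4)] assms(6,7) u
    by (simp add: qcnj_pure neg_eq_iff_add_eq_0)
  then have "a * b * qcnj c = 0 \<or> y1 = 0"
    using u by (simp flip: scaleR_2)
  ultimately show ?thesis
    using stationary_outer_nonzero[OF assms(1,4,5)] by auto
qed

lemma stationary_point_if_closed_disk:
  assumes disk: "triu3_range a b c = {q. qabs q \<le> r}" and "0 \<le> r" "qsqnorm u = 1"
  shows "\<exists>y1 y2 y3. sqnorm3 y1 y2 y3 = 1 \<and> stationary a b c u (2 * r) y1 y2 y3"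
proof -
  have bound: "qabs (triu3_form a b c x1 x2 x3) \<le> r * sqnorm3 x1 x2 x3" for x1 x2 x3
    by (rule qabs_triu3_form_le) (use disk in \<open>auto simp: triu3_range_def\<close>)
  have "r *\<^sub>R u \<in> triu3_range a b c"
    using assms by (simp add: qabs_scaleR qabs_eq_sqrt_qsqnorm)
  then obtain y1 y2 y3 where y: "sqnorm3 y1 y2 y3 = 1" "triu3_form a b c y1 y2 y3 = r *\<^sub>R u"
    unfolding triu3_range_def by auto
  have "qRe (qcnj u * triu3_form a b c x1 x2 x3) \<le> r * sqnorm3 x1 x2 x3" for x1 x2 x3
    using qRe_le_qabs[of "qcnj u * triu3_form a b c x1 x2 x3"] bound[of x1 x2 x3] assms(3)
    by (simp add: qabs_mult qabs_eq_sqrt_qsqnorm[of u] del: quat_components_times)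
  moreover have "qRe (qcnj u * triu3_form a b c y1 y2 y3) = r * sqnorm3 y1 y2 y3"
    using y assms(3) by simp
  ultimately show ?thesis
    using y(1) stationary_if_maximizer by blast
qed

lemma not_closed_disk_origin_triu3_range:
  assumes "a \<noteq> 0" "b \<noteq> 0" "c \<noteq> 0"
  shows "\<not> closed_disk_origin (triu3_range a b c)"
proof
  assume "closed_disk_origin (triu3_range a b c)"
  then obtain r where disk: "triu3_range a b c = {q. qabs q \<le> r}"
    unfolding closed_disk_origin_def by blast
  have "(1 / 2) *\<^sub>R a \<in> triu3_range a b c"
    unfolding triu3_range_def triu3_form_def sqnorm3_def
    by (intro CollectI exI[of _ "sqrt (1 / 2) *\<^sub>R 1"] exI[of _ 0]) (simp add: power2_eq_square)
  then have "qabs a \<le> 2 * r"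
    using disk by (simp add: qabs_scaleR)
  moreover have "0 < qabs a"
    using assms(1) by (simp add: less_le qabs_nonneg)
  ultimately have "0 < r"
    by linarith
  then have R: "2 * r \<noteq> 0"
    by simp
  have real_unit: "2 * r * ((2 * r)\<^sup>2 - qsqnorm a - qsqnorm b - qsqnorm c) = 2 * \<sigma> * qRe (a * b * qcnj c)"
    if \<sigma>: "\<sigma>\<^sup>2 = 1" for \<sigma>
  proof -
    obtain y1 y2 y3 where "sqnorm3 y1 y2 y3 = 1" "stationary a b c (of_real \<sigma>) (2 * r) y1 y2 y3"
      using stationary_point_if_closed_disk[OF disk, of "of_real \<sigma>"] \<open>0 < r\<close> \<sigma>
      by (auto simp: qsqnorm_def)
    then show ?thesis
      using stationary_real_unit \<sigma> R by blast
  qed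
  from real_unit[of 1] real_unit[of "- 1"]
  have "qRe (a * b * qcnj c) = 0" "(2 * r)\<^sup>2 = qsqnorm a + qsqnorm b + qsqnorm c"
    using R by auto
  moreover obtain y1 y2 y3
    where "sqnorm3 y1 y2 y3 = 1" "stationary a b c (Quat 0 1 0 0) (2 * r) y1 y2 y3"
    using stationary_point_if_closed_disk[OF disk, of "Quat 0 1 0 0"] \<open>0 < r\<close>
    by (auto simp: qsqnorm_def)
  ultimately have "a * b * qcnj c = 0"
    using stationary_pure_unit R by (simp add: qsqnorm_def)
  then show False
    using assms by simp
qed

lemma closed_disk_origin_triu3_range_iff:
  "closed_disk_origin (triu3_range a b c) \<longleftrightarrow> a = 0 \<or> b = 0 \<or> c = 0"
proof
  assume "a = 0 \<or> b = 0 \<or> c = 0"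
  moreover have "closed_disk_origin (triu3_range a 0 c)"
    using closed_disk_origin_qcnj_image[OF closed_disk_origin_triu3_range_a_zero[of "qcnj a" "qcnj c"]]
    by (simp add: qcnj_image_triu3_range)
  ultimately show "closed_disk_origin (triu3_range a b c)"
    using closed_disk_origin_triu3_range_a_zero closed_disk_origin_triu3_range_c_zero by auto
qed (use not_closed_disk_origin_triu3_range in blast)

theorem theorem5p1:
  fixes A :: "nat \<Rightarrow> nat \<Rightarrow> quat"
  assumes "strictly_upper_triangular 3 A"
  shows "(closed_disk_origin (numerical_range 3 A) \<longleftrightarrow> cycle_free 3 A)
       \<and> (cycle_free 3 A \<longleftrightarrow> A 1 2 * A 1 3 * A 2 3 = 0)"
  unfolding numerical_range_3_eq_triu3_range[OF assms] cycle_free_3_iff[OF assms]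
    closed_disk_origin_triu3_range_iff
  by auto

end
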